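(* There exist a connected graph $G$ of order $n\geq 2$ and a graph $H$ with connected components $H_1,\dots,H_k$ such that $\chi_L(G\odot H)=\max\{\chi_L(H_t+K_1)\mid 1\leq t\leq k\}$.
   Context: All graphs are finite and simple. A $k$-coloring of a connected graph $G$ is a map $c:V(G)\to\{1,\dots,k\}$ with $c(u)\neq c(v)$ for adjacent $u,v$; it induces the partition $\Pi=\{C_1,\dots,C_k\}$ into color classes $C_i=c^{-1}(i)$. The color code of $v$ is $c_\Pi(v)=(d(v,C_1),\dots,d(v,C_k))$ with $d(v,C_i)=\min\{d(v,x): x\in C_i\}$ (graph distance). $c$ is a locating coloring if distinct vertices have distinct color codes; the locating-chromatic number $\chi_L(G)$ is the least $k$ for which a locating $k$-coloring exists. The corona product $G\odot H$ of a graph $G$ with vertex set $\{a_1,\dots,a_n\}$ and a graph $H$ is obtained from one copy of $G$ and $n$ disjoint copies of $H$ by joining $a_i$ to every vertex of the $i$-th copy of $H$. For a graph $F$, $F+K_1$ denotes the join of $F$ with a single new vertex adjacent to all vertices of $F$. *)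

theory Defs
  imports Main
begin

definition graph :: "'a set \<Rightarrow> ('a \<Rightarrow> 'a \<Rightarrow> bool) \<Rightarrow> bool" where
  "graph V E \<longleftrightarrow> finite V \<and>
     (\<forall>u v. E u v \<longrightarrow> u \<in> V \<and> v \<in> V \<and> u \<noteq> v \<and> E v u)"

definition walk :: "'a set \<Rightarrow> ('a \<Rightarrow> 'a \<Rightarrow> bool) \<Rightarrow> 'a list \<Rightarrow> bool" where
  "walk V E xs \<longleftrightarrow> xs \<noteq> [] \<and> set xs \<subseteq> V \<and>
     (\<forall>i. Suc i < length xs \<longrightarrow> E (xs ! i) (xs ! Suc i))"

definition connected_graph :: "'a set \<Rightarrow> ('a \<Rightarrow> 'a \<Rightarrow> bool) \<Rightarrow> bool" where
  "connected_graph V E \<longleftrightarrow> V \<noteq> {} \<and>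
     (\<forall>u\<in>V. \<forall>v\<in>V. \<exists>xs. walk V E xs \<and> hd xs = u \<and> last xs = v)"

definition gdist :: "'a set \<Rightarrow> ('a \<Rightarrow> 'a \<Rightarrow> bool) \<Rightarrow> 'a \<Rightarrow> 'a \<Rightarrow> nat" where
  "gdist V E u v = (LEAST n. \<exists>xs. walk V E xs \<and> hd xs = u \<and> last xs = v \<and> length xs = Suc n)"

definition setdist :: "'a set \<Rightarrow> ('a \<Rightarrow> 'a \<Rightarrow> bool) \<Rightarrow> 'a \<Rightarrow> 'a set \<Rightarrow> nat" where
  "setdist V E v C = Min (gdist V E v ` C)"

definition color_code :: "'a set \<Rightarrow> ('a \<Rightarrow> 'a \<Rightarrow> bool) \<Rightarrow> nat \<Rightarrow> ('a \<Rightarrow> nat) \<Rightarrow> 'a \<Rightarrow> nat list" where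
  "color_code V E k c v = map (\<lambda>i. setdist V E v {x \<in> V. c x = i}) [1..<Suc k]"

definition locating_coloring :: "'a set \<Rightarrow> ('a \<Rightarrow> 'a \<Rightarrow> bool) \<Rightarrow> nat \<Rightarrow> ('a \<Rightarrow> nat) \<Rightarrow> bool" where
  "locating_coloring V E k c \<longleftrightarrow> c ` V = {1..k} \<and>
     (\<forall>u\<in>V. \<forall>v\<in>V. E u v \<longrightarrow> c u \<noteq> c v) \<and>
     inj_on (color_code V E k c) V"

definition chi_L :: "'a set \<Rightarrow> ('a \<Rightarrow> 'a \<Rightarrow> bool) \<Rightarrow> nat" where
  "chi_L V E = (LEAST k. \<exists>c. locating_coloring V E k c)"

text \<open>Corona product G \<odot> H: vertices Inl a (a in G) and Inr (a,h) (copy of h attached to a).\<close>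
definition corona_V :: "'a set \<Rightarrow> 'b set \<Rightarrow> ('a + 'a \<times> 'b) set" where
  "corona_V VG VH = Inl ` VG \<union> Inr ` (VG \<times> VH)"

fun corona_E :: "('a \<Rightarrow> 'a \<Rightarrow> bool) \<Rightarrow> ('b \<Rightarrow> 'b \<Rightarrow> bool) \<Rightarrow> 'b set
     \<Rightarrow> ('a + 'a \<times> 'b) \<Rightarrow> ('a + 'a \<times> 'b) \<Rightarrow> bool" where
  "corona_E EG EH VH (Inl a) (Inl b) = EG a b"
| "corona_E EG EH VH (Inr (a, h)) (Inr (b, h')) = (a = b \<and> EH h h')"
| "corona_E EG EH VH (Inl a) (Inr (b, h)) = (a = b \<and> h \<in> VH)"
| "corona_E EG EH VH (Inr (b, h)) (Inl a) = (a = b \<and> h \<in> VH)"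

definition component :: "'a set \<Rightarrow> ('a \<Rightarrow> 'a \<Rightarrow> bool) \<Rightarrow> 'a \<Rightarrow> 'a set" where
  "component V E v = {u \<in> V. \<exists>xs. walk V E xs \<and> hd xs = v \<and> last xs = u}"

definition components :: "'a set \<Rightarrow> ('a \<Rightarrow> 'a \<Rightarrow> bool) \<Rightarrow> 'a set set" where
  "components V E = component V E ` V"

text \<open>F + K_1 for the subgraph of (V,E) induced by S: new apex vertex None.\<close>
definition cone_V :: "'a set \<Rightarrow> 'a option set" where
  "cone_V S = insert None (Some ` S)"

fun cone_E :: "('a \<Rightarrow> 'a \<Rightarrow> bool) \<Rightarrow> 'a set \<Rightarrow> 'a option \<Rightarrow> 'a option \<Rightarrow> bool" where
  "cone_E E S (Some a) (Some b) = (a \<in> S \<and> b \<in> S \<and> E a b)"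
| "cone_E E S None (Some b) = (b \<in> S)"
| "cone_E E S (Some a) None = (a \<in> S)"
| "cone_E E S None None = False"

end

theory Submission
  imports Defs "HOL-Combinatorics.Transposition"
begin

text \<open>Take \<open>G = K\<^sub>2\<close> and \<open>H = P\<^sub>3\<close>; then \<open>H\<close> is connected and both \<open>G \<odot> H\<close> and \<open>H + K\<^sub>1\<close>
  have locating-chromatic number 4. For the lower bound, each of these graphs contains adjacent
  vertices \<open>a, b\<close> and two further vertices \<open>l\<^sub>1, l\<^sub>2\<close> adjacent to both of them that are twins
  (swapping them is an automorphism). Twins receiving the same colour would have the same colour
  code, so \<open>a, b, l\<^sub>1, l\<^sub>2\<close> get four distinct colours. For the upper bound, explicit 4-colourings are
  checked to be locating: in a connected graph the distance from a vertex to a colour class is 0,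
  1 or at least 2 according to membership and adjacency, and already these truncated colour codes
  are distinct, which is a finite check.\<close>

text \<open>\<open>corona_E\<close> also relates vertices outside \<open>corona_V\<close> (e.g. \<open>Inr (a, h)\<close>, \<open>Inr (a, h')\<close> for any
  \<open>a\<close>), so a corona is not a \<open>graph\<close>; walks and colourings only see the edges inside the
  vertex set, which is all that \<open>simple_on\<close> constrains.\<close>

definition simple_on :: "'a set \<Rightarrow> ('a \<Rightarrow> 'a \<Rightarrow> bool) \<Rightarrow> bool" where
  "simple_on V E \<longleftrightarrow> finite V \<and> (\<forall>u\<in>V. \<forall>v\<in>V. E u v \<longrightarrow> u \<noteq> v \<and> E v u)"

lemma simple_on_if_graph: "graph V E \<Longrightarrow> simple_on V E"
  unfolding graph_def simple_on_def by blast

definition reachable :: "'a set \<Rightarrow> ('a \<Rightarrow> 'a \<Rightarrow> bool) \<Rightarrow> 'a \<Rightarrow> 'a \<Rightarrow> bool" where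
  "reachable V E u v \<longleftrightarrow> (\<exists>xs. walk V E xs \<and> hd xs = u \<and> last xs = v)"

lemma connected_graph_iff_reachable:
  "connected_graph V E \<longleftrightarrow> V \<noteq> {} \<and> (\<forall>u\<in>V. \<forall>v\<in>V. reachable V E u v)"
  unfolding connected_graph_def reachable_def by blast

lemma reachable_refl: "u \<in> V \<Longrightarrow> reachable V E u u"
  unfolding reachable_def walk_def by (rule exI[of _ "[u]"]) auto

lemma reachable_Cons:
  assumes "E u v" "u \<in> V" "reachable V E v w"
  shows "reachable V E u w"
proof -
  obtain xs where xs: "walk V E xs" "hd xs = v" "last xs = w"
    using assms(3) unfolding reachable_def by blast
  have "walk V E (u # xs)"
    unfolding walk_def
  proof (intro conjI allI impI)
    show "set (u # xs) \<subseteq> V" using xs(1) assms(2) unfolding walk_def by auto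
    fix i assume i: "Suc i < length (u # xs)"
    show "E ((u # xs) ! i) ((u # xs) ! Suc i)"
    proof (cases i)
      case 0 then show ?thesis using xs assms(1) unfolding walk_def by (auto simp: hd_conv_nth)
    next
      case (Suc j) then show ?thesis using xs(1) i unfolding walk_def by auto
    qed
  qed simp
  moreover have "last (u # xs) = w" using xs walk_def by auto
  ultimately show ?thesis unfolding reachable_def by (intro exI[of _ "u # xs"]) auto
qed

lemma reachable_if_rtranclp:
  assumes "(\<lambda>x y. E x y \<and> x \<in> V \<and> y \<in> V)\<^sup>*\<^sup>* u v" "v \<in> V"
  shows "reachable V E u v"
  using assms by (induction rule: converse_rtranclp_induct) (auto intro: reachable_refl reachable_Cons)

lemma connected_graph_if_radius_le_2:
  assumes G: "simple_on V E" and h: "h \<in> V"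
    and near: "\<forall>x\<in>V. x = h \<or> E x h \<or> (\<exists>y\<in>V. E x y \<and> E y h)"
  shows "connected_graph V E"
proof -
  define R where "R x y \<longleftrightarrow> E x y \<and> x \<in> V \<and> y \<in> V" for x y
  have edge: "R x y" "R y x" if "E x y" "x \<in> V" "y \<in> V" for x y
    using G that unfolding R_def simple_on_def by blast+
  have hub: "R\<^sup>*\<^sup>* x h \<and> R\<^sup>*\<^sup>* h x" if x: "x \<in> V" for x
  proof -
    consider "x = h" | "E x h" | y where "y \<in> V" "E x y" "E y h" using near x by blast
    then show ?thesis
    proof cases
      case 2 then show ?thesis using edge x h by blast
    next
      case (3 y)
      then have "R x y" "R y h" "R h y" "R y x" using edge x h by blast+
      then show ?thesis by (meson converse_rtranclp_into_rtranclp r_into_rtranclp)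
    qed simp
  qed
  have "reachable V E u v" if "u \<in> V" "v \<in> V" for u v
    using reachable_if_rtranclp[of E V u v] hub[OF that(1)] hub[OF that(2)] that(2)
    unfolding R_def[abs_def] by (meson rtranclp_trans)
  then show ?thesis using h unfolding connected_graph_iff_reachable by blast
qed

lemma gdist_le_walk:
  "walk V E xs \<Longrightarrow> hd xs = u \<Longrightarrow> last xs = v \<Longrightarrow> gdist V E u v \<le> length xs - 1"
  unfolding gdist_def by (rule Least_le, rule exI[of _ xs]) (auto simp: walk_def)

lemma shortest_walk_exists:
  assumes "reachable V E u v"
  obtains xs where "walk V E xs" "hd xs = u" "last xs = v" "length xs = Suc (gdist V E u v)"
proof -
  obtain xs where xs: "walk V E xs" "hd xs = u" "last xs = v"
    using assms unfolding reachable_def by blast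
  then have "length xs = Suc (length xs - 1)" by (cases xs) (auto simp: walk_def)
  with xs have "\<exists>n xs. walk V E xs \<and> hd xs = u \<and> last xs = v \<and> length xs = Suc n" by blast
  then have "\<exists>xs. walk V E xs \<and> hd xs = u \<and> last xs = v \<and> length xs = Suc (gdist V E u v)"
    unfolding gdist_def by (rule LeastI_ex)
  with that show ?thesis by blast
qed

lemma gdist_self: "u \<in> V \<Longrightarrow> gdist V E u u = 0"
  using gdist_le_walk[of V E "[u]" u u] by (auto simp: walk_def)

lemma gdist_ge_1:
  assumes "reachable V E u v" "u \<noteq> v"
  shows "1 \<le> gdist V E u v"
proof (rule ccontr)
  assume "\<not> ?thesis"
  then have "gdist V E u v = 0" by simp
  then obtain xs where "hd xs = u" "last xs = v" "length xs = 1"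
    using shortest_walk_exists[OF assms(1)] by auto
  then show False using assms(2) by (cases xs) auto
qed

lemma gdist_ge_2:
  assumes "reachable V E u v" "u \<noteq> v" "\<not> E u v"
  shows "2 \<le> gdist V E u v"
proof (rule ccontr)
  assume "\<not> ?thesis"
  with gdist_ge_1[OF assms(1,2)] have "gdist V E u v = 1" by simp
  then obtain xs where xs: "walk V E xs" "hd xs = u" "last xs = v" "length xs = Suc 1"
    using shortest_walk_exists[OF assms(1)] by metis
  then obtain a b where "xs = [a, b]" by (cases xs; cases "tl xs") auto
  with xs have "E u v" unfolding walk_def by auto
  with assms(3) show False by simp
qed

lemma gdist_edge:
  assumes "simple_on V E" "u \<in> V" "v \<in> V" "E u v"
  shows "gdist V E u v = 1"
proof -
  have uv: "u \<in> V" "v \<in> V" "u \<noteq> v" using assms unfolding simple_on_def by auto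
  then have "walk V E [u, v]" using assms(4) unfolding walk_def by (auto simp: less_Suc_eq)
  then have "gdist V E u v \<le> 1" using gdist_le_walk by fastforce
  moreover have "reachable V E u v" using reachable_Cons[of E u v V v, OF assms(4) uv(1) reachable_refl[OF uv(2)]] .
  note gdist_ge_1[OF this uv(3)]
  ultimately show ?thesis by simp
qed

lemma min_setdist_2:
  assumes G: "simple_on V E" "connected_graph V E" and v: "v \<in> V" and C: "C \<subseteq> V" "C \<noteq> {}"
  shows "min (setdist V E v C) 2 = (if v \<in> C then 0 else if \<exists>x\<in>C. E v x then 1 else 2)"
proof -
  have fin: "finite C" using C G(1) finite_subset unfolding simple_on_def by blast
  have reach: "reachable V E v x" if "x \<in> C" for x
    using G(2) v C that unfolding connected_graph_iff_reachable by blast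
  consider "v \<in> C" | x where "v \<notin> C" "x \<in> C" "E v x" | "v \<notin> C" "\<forall>x\<in>C. \<not> E v x" by blast
  then show ?thesis
  proof cases
    case 1
    then have "setdist V E v C \<le> gdist V E v v" unfolding setdist_def using fin by auto
    then show ?thesis using 1 gdist_self[OF v] by simp
  next
    case (2 x)
    have "setdist V E v C \<le> gdist V E v x" unfolding setdist_def using fin 2 by auto
    moreover have "gdist V E v x = 1" using gdist_edge[OF G(1) v _ 2(3)] 2(2) C by blast
    moreover have "1 \<le> gdist V E v y" if "y \<in> C" for y
      using gdist_ge_1 reach that 2(1) by metis
    then have "1 \<le> setdist V E v C" unfolding setdist_def using fin C by auto
    ultimately show ?thesis using 2 by auto
  next
    case 3
    have "2 \<le> gdist V E v y" if "y \<in> C" for y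
      using gdist_ge_2 reach that 3 by metis
    then have "2 \<le> setdist V E v C" unfolding setdist_def using fin C by auto
    then show ?thesis using 3 by simp
  qed
qed

definition truncated_color_code :: "'a set \<Rightarrow> ('a \<Rightarrow> 'a \<Rightarrow> bool) \<Rightarrow> nat \<Rightarrow> ('a \<Rightarrow> nat) \<Rightarrow> 'a \<Rightarrow> nat list" where
  "truncated_color_code V E k c v =
     map (\<lambda>i. if c v = i then 0 else if \<exists>x\<in>V. c x = i \<and> E v x then 1 else 2) [1..<Suc k]"

lemma locating_coloring_if_truncated_color_code_inj:
  assumes G: "simple_on V E" "connected_graph V E"
    and onto: "c ` V = {1..k}" and proper: "\<forall>u\<in>V. \<forall>v\<in>V. E u v \<longrightarrow> c u \<noteq> c v"
    and inj: "inj_on (truncated_color_code V E k c) V"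
  shows "locating_coloring V E k c"
proof -
  have truncated: "map (\<lambda>n. min n 2) (color_code V E k c v) = truncated_color_code V E k c v"
    if v: "v \<in> V" for v
    unfolding color_code_def truncated_color_code_def map_map
  proof (rule map_cong[OF refl])
    fix i assume "i \<in> set [1..<Suc k]"
    then have "{x \<in> V. c x = i} \<noteq> {}" using onto by (metis (mono_tags, lifting)
        atLeastAtMost_iff atLeastLessThanSuc_atLeastAtMost empty_Collect_eq imageE set_upt)
    then show "((\<lambda>n. min n 2) \<circ> (\<lambda>i. setdist V E v {x \<in> V. c x = i})) i =
        (if c v = i then 0 else if \<exists>x\<in>V. c x = i \<and> E v x then 1 else 2)"
      using min_setdist_2[OF G v] v by auto
  qed
  have "inj_on (map (\<lambda>n. min n 2) \<circ> color_code V E k c) V"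
    using inj by (simp add: inj_on_def truncated)
  then have "inj_on (color_code V E k c) V" by (rule inj_on_imageI2)
  then show ?thesis unfolding locating_coloring_def using onto proper by blast
qed

lemma gdist_involutive_automorphism:
  assumes inv: "\<And>x. \<sigma> (\<sigma> x) = x" and V: "\<sigma> ` V \<subseteq> V"
    and aut: "\<forall>x\<in>V. \<forall>y\<in>V. E (\<sigma> x) (\<sigma> y) = E x y"
  shows "gdist V E (\<sigma> u) (\<sigma> v) = gdist V E u v"
proof -
  have "walk V E (map \<sigma> xs)" if xs: "walk V E xs" for xs
    unfolding walk_def
  proof (intro conjI allI impI)
    show "map \<sigma> xs \<noteq> []" "set (map \<sigma> xs) \<subseteq> V" using xs V unfolding walk_def by auto
    fix i assume i: "Suc i < length (map \<sigma> xs)"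
    then have "xs ! i \<in> V" "xs ! Suc i \<in> V" "E (xs ! i) (xs ! Suc i)"
      using xs unfolding walk_def by (simp_all add: nth_mem subset_iff)
    then show "E (map \<sigma> xs ! i) (map \<sigma> xs ! Suc i)" using aut i by simp
  qed
  then have walk_map: "\<exists>ys. walk V E ys \<and> hd ys = \<sigma> a \<and> last ys = \<sigma> b \<and> length ys = Suc n"
    if "walk V E xs" "hd xs = a" "last xs = b" "length xs = Suc n" for xs a b n
    using that by (intro exI[of _ "map \<sigma> xs"]) (auto simp: walk_def hd_map last_map)
  have "(\<exists>xs. walk V E xs \<and> hd xs = \<sigma> u \<and> last xs = \<sigma> v \<and> length xs = Suc n) =
        (\<exists>xs. walk V E xs \<and> hd xs = u \<and> last xs = v \<and> length xs = Suc n)" for n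
    using walk_map[of _ "\<sigma> u" "\<sigma> v" n] walk_map[of _ u v n] inv by metis
  then show ?thesis unfolding gdist_def by simp
qed

lemma locating_coloring_twins_colors_differ:
  assumes lc: "locating_coloring V E k c" and l: "l\<^sub>1 \<in> V" "l\<^sub>2 \<in> V" "l\<^sub>1 \<noteq> l\<^sub>2"
    and aut: "\<forall>x\<in>V. \<forall>y\<in>V. E (transpose l\<^sub>1 l\<^sub>2 x) (transpose l\<^sub>1 l\<^sub>2 y) = E x y"
  shows "c l\<^sub>1 \<noteq> c l\<^sub>2"
proof
  assume same: "c l\<^sub>1 = c l\<^sub>2"
  let ?\<sigma> = "transpose l\<^sub>1 l\<^sub>2"
  have V: "?\<sigma> ` V \<subseteq> V" using l by (auto simp: transpose_def)
  have "?\<sigma> ` {x \<in> V. c x = i} = {x \<in> V. c x = i}" for i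
    using l same by (auto simp: in_transpose_image_iff transpose_def)
  then have "setdist V E l\<^sub>2 {x \<in> V. c x = i} = setdist V E l\<^sub>1 {x \<in> V. c x = i}" for i
    unfolding setdist_def
    using gdist_involutive_automorphism[OF transpose_involutory V aut, of l\<^sub>1]
    by (metis (no_types, lifting) image_cong image_image transpose_apply_first)
  then have "color_code V E k c l\<^sub>1 = color_code V E k c l\<^sub>2"
    unfolding color_code_def by simp
  then show False using lc l unfolding locating_coloring_def inj_on_def by blast
qed

lemma locating_coloring_ge_4:
  assumes lc: "locating_coloring V E k c" and V: "a \<in> V" "b \<in> V" "l\<^sub>1 \<in> V" "l\<^sub>2 \<in> V"
    and E: "E a b" "E a l\<^sub>1" "E b l\<^sub>1" "E a l\<^sub>2" "E b l\<^sub>2" and l: "l\<^sub>1 \<noteq> l\<^sub>2"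
    and aut: "\<forall>x\<in>V. \<forall>y\<in>V. E (transpose l\<^sub>1 l\<^sub>2 x) (transpose l\<^sub>1 l\<^sub>2 y) = E x y"
  shows "4 \<le> k"
proof -
  have proper: "\<forall>u\<in>V. \<forall>v\<in>V. E u v \<longrightarrow> c u \<noteq> c v" and onto: "c ` V = {1..k}"
    using lc unfolding locating_coloring_def by auto
  have "c l\<^sub>1 \<noteq> c l\<^sub>2" using locating_coloring_twins_colors_differ[OF lc V(3,4) l aut] .
  with proper V E have "card {c a, c b, c l\<^sub>1, c l\<^sub>2} = 4" by auto
  moreover have "{c a, c b, c l\<^sub>1, c l\<^sub>2} \<subseteq> {1..k}" using onto V by auto
  ultimately have "4 \<le> card {1..k}" by (metis card_mono finite_atLeastAtMost)
  then show ?thesis by simp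
qed

lemma chi_L_eqI:
  assumes "locating_coloring V E k c" "\<And>k' c'. locating_coloring V E k' c' \<Longrightarrow> k \<le> k'"
  shows "chi_L V E = k"
  unfolding chi_L_def using assms by (intro Least_equality) auto

definition K2_edge :: "nat \<Rightarrow> nat \<Rightarrow> bool" where
  "K2_edge x y \<longleftrightarrow> (x = 0 \<and> y = 1) \<or> (x = 1 \<and> y = 0)"

definition P3_edge :: "nat \<Rightarrow> nat \<Rightarrow> bool" where
  "P3_edge x y \<longleftrightarrow> K2_edge x y \<or> (x = 1 \<and> y = 2) \<or> (x = 2 \<and> y = 1)"

lemma upt_1_Suc_4: "[1..<Suc 4] = [1, 2, 3, 4 :: nat]"
  by (simp add: upt_rec)

lemma atLeastAtMost_1_4: "{1..4 :: nat} = {1, 2, 3, 4}"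
  by auto

lemma graph_K2: "graph {0, 1} K2_edge"
  by (auto simp: graph_def K2_edge_def)

lemma graph_P3: "graph {0, 1, 2} P3_edge"
  by (auto simp: graph_def P3_edge_def K2_edge_def)

lemma components_P3: "components {0, 1, 2} P3_edge = {{0, 1, 2}}"
proof -
  have "connected_graph {0, 1, 2 :: nat} P3_edge"
    by (rule connected_graph_if_radius_le_2[OF simple_on_if_graph[OF graph_P3], where h = 1])
       (auto simp: P3_edge_def K2_edge_def)
  then have "component {0, 1, 2} P3_edge v = {0, 1, 2}" if "v \<in> {0, 1, 2}" for v
    using that unfolding component_def connected_graph_def by blast
  then show ?thesis unfolding components_def by auto
qed

abbreviation corona_K2_P3_V :: "(nat + nat \<times> nat) set" where
  "corona_K2_P3_V \<equiv> corona_V {0, 1} {0, 1, 2}"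

abbreviation corona_K2_P3_E :: "nat + nat \<times> nat \<Rightarrow> nat + nat \<times> nat \<Rightarrow> bool" where
  "corona_K2_P3_E \<equiv> corona_E K2_edge P3_edge {0, 1, 2}"

lemma corona_K2_P3_V_eq:
  "corona_K2_P3_V = {Inl 0, Inl 1, Inr (0, 0), Inr (0, 1), Inr (0, 2), Inr (1, 0), Inr (1, 1), Inr (1, 2)}"
  by (auto simp: corona_V_def)

lemma simple_on_corona_K2_P3: "simple_on corona_K2_P3_V corona_K2_P3_E"
  unfolding simple_on_def corona_K2_P3_V_eq by (simp add: K2_edge_def P3_edge_def)

fun corona_coloring :: "nat + nat \<times> nat \<Rightarrow> nat" where
  "corona_coloring (Inl a) = (if a = 0 then 1 else 3)"
| "corona_coloring (Inr (a, h)) =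
     (if a = 0 then (if h = 0 then 3 else if h = 1 then 2 else 4)
      else (if h = 0 then 1 else if h = 1 then 4 else 2))"

lemma chi_L_corona_K2_P3: "chi_L corona_K2_P3_V corona_K2_P3_E = 4"
proof (rule chi_L_eqI)
  have "connected_graph corona_K2_P3_V corona_K2_P3_E"
    by (rule connected_graph_if_radius_le_2[OF simple_on_corona_K2_P3, where h = "Inl 0"])
       (unfold corona_K2_P3_V_eq, simp_all add: K2_edge_def P3_edge_def)
  then show "locating_coloring corona_K2_P3_V corona_K2_P3_E 4 corona_coloring"
  proof (rule locating_coloring_if_truncated_color_code_inj[OF simple_on_corona_K2_P3])
    show "corona_coloring ` corona_K2_P3_V = {1..4}"
      unfolding corona_K2_P3_V_eq atLeastAtMost_1_4 by (simp add: insert_commute)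
    show "\<forall>u\<in>corona_K2_P3_V. \<forall>v\<in>corona_K2_P3_V. corona_K2_P3_E u v \<longrightarrow> corona_coloring u \<noteq> corona_coloring v"
      unfolding corona_K2_P3_V_eq by (simp add: K2_edge_def P3_edge_def)
    show "inj_on (truncated_color_code corona_K2_P3_V corona_K2_P3_E 4 corona_coloring) corona_K2_P3_V"
      unfolding truncated_color_code_def corona_K2_P3_V_eq upt_1_Suc_4
      by (simp add: K2_edge_def P3_edge_def)
  qed
next
  fix k c assume "locating_coloring corona_K2_P3_V corona_K2_P3_E k c"
  then show "4 \<le> k"
    by (rule locating_coloring_ge_4[where a = "Inl 0 :: nat + nat \<times> nat" and b = "Inr (0, 1)"
          and l\<^sub>1 = "Inr (0, 0)" and l\<^sub>2 = "Inr (0, 2)"])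
       (unfold corona_K2_P3_V_eq, auto simp: K2_edge_def P3_edge_def transpose_def)
qed

fun cone_P3_coloring :: "nat option \<Rightarrow> nat" where
  "cone_P3_coloring None = 1"
| "cone_P3_coloring (Some n) = (if n = 0 then 2 else if n = 1 then 3 else 4)"

lemma cone_P3_V_eq: "cone_V {0, 1, 2 :: nat} = {None, Some 0, Some 1, Some 2}"
  by (auto simp: cone_V_def)

lemma simple_on_cone_P3: "simple_on (cone_V {0, 1, 2}) (cone_E P3_edge {0, 1, 2})"
  unfolding simple_on_def cone_P3_V_eq by (simp add: P3_edge_def K2_edge_def)

lemma chi_L_cone_P3: "chi_L (cone_V {0, 1, 2}) (cone_E P3_edge {0, 1, 2}) = 4"
proof (rule chi_L_eqI)
  have "connected_graph (cone_V {0, 1, 2}) (cone_E P3_edge {0, 1, 2})"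
    by (rule connected_graph_if_radius_le_2[OF simple_on_cone_P3, where h = None])
       (unfold cone_P3_V_eq, simp_all)
  then show "locating_coloring (cone_V {0, 1, 2}) (cone_E P3_edge {0, 1, 2}) 4 cone_P3_coloring"
  proof (rule locating_coloring_if_truncated_color_code_inj[OF simple_on_cone_P3])
    show "cone_P3_coloring ` cone_V {0, 1, 2} = {1..4}"
      unfolding cone_P3_V_eq atLeastAtMost_1_4 by (simp add: insert_commute)
    show "\<forall>u\<in>cone_V {0, 1, 2}. \<forall>v\<in>cone_V {0, 1, 2}.
        cone_E P3_edge {0, 1, 2} u v \<longrightarrow> cone_P3_coloring u \<noteq> cone_P3_coloring v"
      unfolding cone_P3_V_eq by (simp add: P3_edge_def K2_edge_def)
    show "inj_on (truncated_color_code (cone_V {0, 1, 2}) (cone_E P3_edge {0, 1, 2}) 4 cone_P3_coloring)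
        (cone_V {0, 1, 2})"
      unfolding truncated_color_code_def cone_P3_V_eq upt_1_Suc_4 by (simp add: P3_edge_def K2_edge_def)
  qed
next
  fix k c assume "locating_coloring (cone_V {0, 1, 2}) (cone_E P3_edge {0, 1, 2}) k c"
  then show "4 \<le> k"
    by (rule locating_coloring_ge_4[where a = "None :: nat option" and b = "Some 1"
          and l\<^sub>1 = "Some 0" and l\<^sub>2 = "Some 2"])
       (unfold cone_P3_V_eq, auto simp: P3_edge_def K2_edge_def transpose_def)
qed

theorem theorem2:
  shows "\<exists>(VG :: nat set) EG (VH :: nat set) EH.
     graph VG EG \<and> connected_graph VG EG \<and> card VG \<ge> 2 \<and>
     graph VH EH \<and> VH \<noteq> {} \<and>
     chi_L (corona_V VG VH) (corona_E EG EH VH) =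
       Max ((\<lambda>S. chi_L (cone_V S) (cone_E EH S)) ` components VH EH)"
proof (intro exI conjI)
  show "graph {0, 1} K2_edge" by (rule graph_K2)
  show "connected_graph {0, 1} K2_edge"
    by (rule connected_graph_if_radius_le_2[OF simple_on_if_graph[OF graph_K2], where h = 0])
       (auto simp: K2_edge_def)
  show "2 \<le> card {0, 1 :: nat}" by simp
  show "graph {0, 1, 2} P3_edge" by (rule graph_P3)
  show "{0, 1, 2 :: nat} \<noteq> {}" by simp
  show "chi_L corona_K2_P3_V corona_K2_P3_E =
      Max ((\<lambda>S. chi_L (cone_V S) (cone_E P3_edge S)) ` components {0, 1, 2} P3_edge)"
    unfolding components_P3 image_insert image_empty Max_singleton chi_L_corona_K2_P3 chi_L_cone_P3 ..
qed

end
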